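(* Let $X$ be any one of the random Fibonacci subshift $X_{\vartheta_1}$, the random tribonacci subshift $X_\tau$, or the degree-$m$ random metallic mean subshift $X_{\vartheta_m}$ ($m\ge2$). Then $X$ is semi-mixing with respect to the set $\mathcal{S}=\{a\}$ of length-one words.
   Context: For a random substitution $\vartheta$ (a map assigning to each letter a non-empty finite set of non-empty words, extended to words via set concatenation $\vartheta(w_1\cdots w_k)=\vartheta(w_1)\cdots\vartheta(w_k)$), a word is $\vartheta$-legal if it is a subword of some word in $\vartheta^k(a)$ for some $k\ge0$ and letter $a$. $X_\vartheta$ is the set of bi-infinite sequences all of whose finite subwords are $\vartheta$-legal; $\mathcal{L}$ is its language (set of finite subwords of its elements), $\mathcal{L}^\ell$ those of length $\ell$. A subshift is semi-mixing with respect to $\mathcal{S}\subsetneq\mathcal{L}^\ell$ if for every $w\in\mathcal{L}$ there is $N$ such that for every $n\ge N$ there exist a word $u$ of length $n$ and $s\in\mathcal{S}$ with $wus\in\mathcal{L}$. $\vartheta_1\colon a\mapsto\{ab,ba\},\ b\mapsto\{a\}$; $\tau\colon a\mapsto\{ab,ba\},\ b\mapsto\{ac,ca\},\ c\mapsto\{a\}$; $\vartheta_m\colon a\mapsto\{a^iba^{m-i}\mid0\le i\le m\},\ b\mapsto\{a\}$. *)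

theory Defs
  imports Main "HOL-Library.Sublist"
begin

fun subst_word :: "('a \<Rightarrow> 'a list set) \<Rightarrow> 'a list \<Rightarrow> 'a list set" where
  "subst_word \<theta> [] = {[]}"
| "subst_word \<theta> (x # xs) = {u @ v | u v. u \<in> \<theta> x \<and> v \<in> subst_word \<theta> xs}"

definition subst_set :: "('a \<Rightarrow> 'a list set) \<Rightarrow> 'a list set \<Rightarrow> 'a list set" where
  "subst_set \<theta> W = (\<Union>w\<in>W. subst_word \<theta> w)"

definition subst_iter :: "('a \<Rightarrow> 'a list set) \<Rightarrow> nat \<Rightarrow> 'a \<Rightarrow> 'a list set" where
  "subst_iter \<theta> k a = (subst_set \<theta> ^^ k) {[a]}"

definition legal :: "('a \<Rightarrow> 'a list set) \<Rightarrow> 'a list \<Rightarrow> bool" where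
  "legal \<theta> w \<longleftrightarrow> (\<exists>k a. \<exists>v\<in>subst_iter \<theta> k a. sublist w v)"

definition factor :: "(int \<Rightarrow> 'a) \<Rightarrow> int \<Rightarrow> nat \<Rightarrow> 'a list" where
  "factor x i n = map (\<lambda>j. x (i + int j)) [0..<n]"

definition subshift :: "('a \<Rightarrow> 'a list set) \<Rightarrow> (int \<Rightarrow> 'a) set" where
  "subshift \<theta> = {x. \<forall>i n. legal \<theta> (factor x i n)}"

definition lang :: "(int \<Rightarrow> 'a) set \<Rightarrow> 'a list set" where
  "lang X = {w. \<exists>x\<in>X. \<exists>i. w = factor x i (length w)}"

definition lang_len :: "(int \<Rightarrow> 'a) set \<Rightarrow> nat \<Rightarrow> 'a list set" where
  "lang_len X l = {w \<in> lang X. length w = l}"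

definition semi_mixing :: "(int \<Rightarrow> 'a) set \<Rightarrow> 'a list set \<Rightarrow> nat \<Rightarrow> bool" where
  "semi_mixing X S l \<longleftrightarrow> S \<subset> lang_len X l \<and>
     (\<forall>w\<in>lang X. \<exists>N. \<forall>n\<ge>N. \<exists>u s. length u = n \<and> s \<in> S \<and> w @ u @ s \<in> lang X)"

datatype ab = A | B
datatype abc = A3 | B3 | C3

fun fib_subst :: "ab \<Rightarrow> ab list set" where
  "fib_subst A = {[A, B], [B, A]}"
| "fib_subst B = {[A]}"

fun trib_subst :: "abc \<Rightarrow> abc list set" where
  "trib_subst A3 = {[A3, B3], [B3, A3]}"
| "trib_subst B3 = {[A3, C3], [C3, A3]}"
| "trib_subst C3 = {[A3]}"

fun metallic_subst :: "nat \<Rightarrow> ab \<Rightarrow> ab list set" where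
  "metallic_subst m A = {replicate i A @ [B] @ replicate (m - i) A | i. i \<le> m}"
| "metallic_subst m B = {[A]}"

end

theory Submission
  imports Defs
begin

(* A seed s a t in theta^k(a) with s, t non-empty can be iterated: theta^(k j)(a) contains
   L_j a R_j, where L_j grows to the left and R_j to the right and each is nested in the next.
   Substituting a further K times around a word y in theta^K(a) gives nested words whose limit is
   a point of X_theta with y at the origin, so every subword of theta^K(a) lies in the language.
   For semi-mixing, a word w of the language sits in some y in theta^(K+1)(a); extending y by an
   image of R_j with j large, and using that the letter c may occupy any position of any image
   theta(x) without changing its length, c can be placed at every prescribed distance after w.
   For all three substitutions c = a works, with seeds a.a.b in theta_1^2(a), ac.a.b in tau^2(a)
   and b.a.a^(m-1) in theta_m(a). *)

definition subst_pow :: "('a \<Rightarrow> 'a list set) \<Rightarrow> nat \<Rightarrow> 'a list \<Rightarrow> 'a list set" where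
  "subst_pow \<theta> K w = (subst_set \<theta> ^^ K) {w}"

lemma subst_pow_0 [simp]: "subst_pow \<theta> 0 w = {w}"
  by (simp add: subst_pow_def)

lemma subst_pow_Suc: "subst_pow \<theta> (Suc K) w = (\<Union>v\<in>subst_pow \<theta> K w. subst_word \<theta> v)"
  by (simp add: subst_pow_def subst_set_def)

lemma subst_pow_Suc_0 [simp]: "subst_pow \<theta> (Suc 0) w = subst_word \<theta> w"
  by (simp add: subst_pow_Suc)

lemma subst_word_singleton [simp]: "subst_word \<theta> [x] = \<theta> x"
  by auto

lemma subst_word_append:
  "subst_word \<theta> (u @ v) = {p @ q | p q. p \<in> subst_word \<theta> u \<and> q \<in> subst_word \<theta> v}"
proof (induction u)
  case (Cons x u)
  show ?case
    by (auto simp: Cons.IH) (metis append_assoc, metis)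
qed simp

lemma subst_pow_append:
  "subst_pow \<theta> K (u @ v) = {p @ q | p q. p \<in> subst_pow \<theta> K u \<and> q \<in> subst_pow \<theta> K v}"
proof (induction K)
  case (Suc K)
  show ?case
    by (auto simp: subst_pow_Suc Suc.IH subst_word_append) (blast, use subst_word_append in blast)
qed simp

lemma append_in_subst_pow:
  "p \<in> subst_pow \<theta> K u \<Longrightarrow> q \<in> subst_pow \<theta> K v \<Longrightarrow> p @ q \<in> subst_pow \<theta> K (u @ v)"
  by (auto simp: subst_pow_append)

lemma subst_pow_trans:
  "v \<in> subst_pow \<theta> M w \<Longrightarrow> y \<in> subst_pow \<theta> K v \<Longrightarrow> y \<in> subst_pow \<theta> (K + M) w"
  by (induction K arbitrary: y) (auto simp: subst_pow_Suc)

lemma subst_pow_Nil [simp]: "subst_pow \<theta> K [] = {[]}"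
  by (induction K) (auto simp: subst_pow_Suc)

lemma subst_word_nonempty: "(\<And>x. \<theta> x \<noteq> {}) \<Longrightarrow> subst_word \<theta> w \<noteq> {}"
  by (induction w) auto

lemma subst_pow_nonempty:
  assumes "\<And>x. \<theta> x \<noteq> {}" shows "subst_pow \<theta> K w \<noteq> {}"
  using subst_word_nonempty[of \<theta>, OF assms] by (induction K) (auto simp: subst_pow_Suc)

lemma length_le_subst_pow:
  assumes nonerasing: "\<And>x e. e \<in> \<theta> x \<Longrightarrow> e \<noteq> []" and "v \<in> subst_pow \<theta> K w"
  shows "length w \<le> length v"
proof -
  have word: "length u \<le> length v" if "v \<in> subst_word \<theta> u" for u v
    using that
  proof (induction u arbitrary: v)
    case (Cons x u)
    then obtain e r where "v = e @ r" "e \<in> \<theta> x" "r \<in> subst_word \<theta> u"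
      by auto
    moreover have "e \<noteq> []"
      using nonerasing \<open>e \<in> \<theta> x\<close> by blast
    ultimately show ?case
      using Cons.IH[of r] by (cases e) auto
  qed simp
  show ?thesis
    using assms(2)
  proof (induction K arbitrary: v)
    case (Suc K)
    then show ?case
      using word le_trans by (fastforce simp: subst_pow_Suc)
  qed simp
qed

lemma sublist_subst_pow_of_mem:
  assumes "\<And>x. \<theta> x \<noteq> {}" and "c \<in> set z" and "v \<in> subst_pow \<theta> K [c]"
  shows "\<exists>y\<in>subst_pow \<theta> K z. sublist v y"
proof -
  obtain z1 z2 where z: "z = z1 @ [c] @ z2"
    using split_list \<open>c \<in> set z\<close> by fastforce
  obtain p q where "p \<in> subst_pow \<theta> K z1" "q \<in> subst_pow \<theta> K z2"
    using subst_pow_nonempty[of \<theta>, OF assms(1)] by (meson ex_in_conv)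
  then have "p @ v @ q \<in> subst_pow \<theta> K z"
    unfolding z using assms(3) by (intro append_in_subst_pow)
  then show ?thesis
    by (meson sublist_appendI)
qed

definition chosen_image :: "('a \<Rightarrow> 'a list set) \<Rightarrow> nat \<Rightarrow> 'a list \<Rightarrow> 'a list" where
  "chosen_image \<theta> K w = concat (map (\<lambda>x. SOME v. v \<in> subst_pow \<theta> K [x]) w)"

lemma chosen_image_append [simp]:
  "chosen_image \<theta> K (u @ v) = chosen_image \<theta> K u @ chosen_image \<theta> K v"
  by (simp add: chosen_image_def)

lemma chosen_image_Nil [simp]: "chosen_image \<theta> K [] = []"
  by (simp add: chosen_image_def)

lemma suffix_chosen_image: "suffix u v \<Longrightarrow> suffix (chosen_image \<theta> K u) (chosen_image \<theta> K v)"
  by (auto simp: suffix_def)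

lemma prefix_chosen_image: "prefix u v \<Longrightarrow> prefix (chosen_image \<theta> K u) (chosen_image \<theta> K v)"
  by (auto simp: prefix_def)

lemma chosen_image_in_subst_pow:
  assumes "\<And>x. \<theta> x \<noteq> {}" shows "chosen_image \<theta> K w \<in> subst_pow \<theta> K w"
proof (induction w)
  case (Cons x w)
  have "(SOME v. v \<in> subst_pow \<theta> K [x]) \<in> subst_pow \<theta> K [x]"
    using subst_pow_nonempty[of \<theta>, OF assms] by (meson ex_in_conv someI_ex)
  then show ?case
    using append_in_subst_pow[OF _ Cons.IH, of _ "[x]"] by (simp add: chosen_image_def)
qed (simp add: chosen_image_def)

lemma length_factor [simp]: "length (factor x i n) = n"
  by (simp add: factor_def)

lemma factor_add: "factor x i (m + n) = factor x i m @ factor x (i + int m) n"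
  by (rule nth_equalityI) (auto simp: factor_def nth_append add.assoc)

lemma sublist_factor_in_lang:
  assumes "x \<in> X" and "sublist w (factor x i n)" shows "w \<in> lang X"
proof -
  obtain p q where pwq: "factor x i n = p @ w @ q"
    using assms(2) by (auto simp: sublist_def)
  then have "n = length p + length w + length q"
    by (metis length_append length_factor add.assoc)
  then have "p @ w @ q = factor x i (length p) @ factor x (i + int (length p)) (length w) @
      factor x (i + int (length p) + int (length w)) (length q)"
    using pwq by (simp add: factor_add add.assoc)
  then have "w = factor x (i + int (length p)) (length w)"
    by (simp add: append_eq_append_conv factor_def)
  then show ?thesis
    using assms(1) by (auto simp: lang_def)
qed

lemma legal_iff_subst_pow: "legal \<theta> w \<longleftrightarrow> (\<exists>K c. \<exists>v\<in>subst_pow \<theta> K [c]. sublist w v)"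
  by (auto simp: legal_def subst_iter_def subst_pow_def)

lemma legal_sublist: "legal \<theta> v \<Longrightarrow> sublist w v \<Longrightarrow> legal \<theta> w"
  by (meson legal_def sublist_order.order_trans)

lemma legal_if_in_lang_subshift:
  assumes "w \<in> lang (subshift \<theta>)" shows "legal \<theta> w"
proof -
  obtain x i where x: "x \<in> subshift \<theta>" and w: "w = factor x i (length w)"
    using assms unfolding lang_def by blast
  have "legal \<theta> (factor x i (length w))"
    using x by (simp add: subshift_def)
  then show ?thesis
    by (simp only: w[symmetric])
qed

lemma nested_words_limit:
  fixes L R :: "nat \<Rightarrow> 'a list"
  assumes L_mono: "\<And>j. suffix (L j) (L (Suc j))" and R_mono: "\<And>j. prefix (R j) (R (Suc j))"
    and L_long: "\<And>j. j \<le> length (L j)" and R_long: "\<And>j. j \<le> length (R j)"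
  obtains x where "\<And>i n. \<exists>j. sublist (factor x i n) (L j @ R j)"
    and "factor x 0 (length (R 0)) = R 0"
proof -
  have L_chain: "suffix (L j) (L j')" and R_chain: "prefix (R j) (R j')" if "j \<le> j'" for j j'
    using that by (induction j' rule: dec_induct)
      (auto intro: suffix_order.trans prefix_order.trans L_mono R_mono)
  define W where "W j = L j @ R j" for j
  define centre where "centre j i = nat (int (length (L j)) + i)" for j i
  have W_stable: "W j' ! centre j' i = W j ! centre j i" if "\<bar>i\<bar> < int j" "j \<le> j'" for i j j'
  proof -
    obtain u v where L': "L j' = u @ L j" and R': "R j' = R j @ v"
      using L_chain[OF \<open>j \<le> j'\<close>] R_chain[OF \<open>j \<le> j'\<close>] by (auto simp: suffix_def prefix_def)
    have "centre j i < length (W j)"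
      using L_long[of j] R_long[of j] that by (auto simp: centre_def W_def)
    moreover have "centre j' i = length u + centre j i"
      using L_long[of j] that by (simp add: L' centre_def)
    moreover have "W j' = u @ W j @ v"
      by (simp add: W_def L' R')
    ultimately show ?thesis
      by (simp only: nth_append_length_plus nth_append_left)
  qed
  \<comment> \<open>position 0 of \<open>x\<close> is the junction of \<open>L j\<close> and \<open>R j\<close>\<close>
  define x where "x i = W (nat \<bar>i\<bar> + 1) ! centre (nat \<bar>i\<bar> + 1) i" for i
  have factor_x: "factor x i n = take n (drop (centre j i) (W j))"
    if "\<bar>i\<bar> + int n < int j" for i n j
  proof (rule nth_equalityI)
    show "length (factor x i n) = length (take n (drop (centre j i) (W j)))"
      using L_long[of j] R_long[of j] that by (auto simp: factor_def centre_def W_def)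
  next
    fix m assume "m < length (factor x i n)"
    then have "m < n" by (simp add: factor_def)
    then have "x (i + int m) = W j ! centre j (i + int m)"
      unfolding x_def using that W_stable[of "i + int m" "nat \<bar>i + int m\<bar> + 1" j] by auto
    moreover have "centre j (i + int m) = centre j i + m"
      using L_long[of j] that by (simp add: centre_def)
    moreover have "centre j i \<le> length (W j)"
      using L_long[of j] R_long[of j] that by (simp add: centre_def W_def)
    ultimately show "factor x i n ! m = take n (drop (centre j i) (W j)) ! m"
      using \<open>m < n\<close> by (simp add: factor_def)
  qed
  show thesis
  proof
    fix i n
    let ?j = "Suc (nat \<bar>i\<bar> + n)"
    have "factor x i n = take n (drop (centre ?j i) (W ?j))"
      by (rule factor_x) simp
    moreover have "sublist (take n (drop (centre ?j i) (W ?j))) (W ?j)"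
      by (rule sublist_order.order_trans[OF sublist_take sublist_drop])
    ultimately show "\<exists>j. sublist (factor x i n) (L j @ R j)"
      unfolding W_def by auto
  next
    let ?j = "length (R 0) + 1"
    show "factor x 0 (length (R 0)) = R 0"
      using factor_x[of 0 "length (R 0)" ?j] R_chain[of 0 ?j] by (auto simp: W_def centre_def prefix_def)
  qed
qed

definition admits_letter_everywhere :: "('a \<Rightarrow> 'a list set) \<Rightarrow> 'a \<Rightarrow> bool" where
  "admits_letter_everywhere \<theta> c \<longleftrightarrow>
     (\<forall>x. \<forall>e\<in>\<theta> x. \<forall>q<length e. \<exists>e'\<in>\<theta> x. length e' = length e \<and> e' ! q = c)"

lemma subst_word_with_letter_at:
  assumes "admits_letter_everywhere \<theta> c" and "\<And>x. \<theta> x \<noteq> {}"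
    and "\<And>x e. e \<in> \<theta> x \<Longrightarrow> e \<noteq> []" and "p < length z"
  shows "\<exists>\<rho>\<in>subst_word \<theta> z. p < length \<rho> \<and> \<rho> ! p = c"
  using \<open>p < length z\<close>
proof (induction z arbitrary: p)
  case (Cons x z)
  obtain e where e: "e \<in> \<theta> x"
    using assms(2) by blast
  show ?case
  proof (cases "p < length e")
    case True
    then obtain e' where "e' \<in> \<theta> x" "length e' = length e" "e' ! p = c"
      using assms(1) e True unfolding admits_letter_everywhere_def by blast
    moreover obtain r where "r \<in> subst_word \<theta> z"
      using subst_word_nonempty[of \<theta>, OF assms(2)] by blast
    ultimately show ?thesis
      using True by (intro bexI[of _ "e' @ r"]) (auto simp: nth_append)
  next
    case False
    then have "p - length e < length z"
      using Cons.prems assms(3)[OF e] by (cases e) auto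
    then obtain r where "r \<in> subst_word \<theta> z" "p - length e < length r" "r ! (p - length e) = c"
      using Cons.IH by blast
    then show ?thesis
      using False e by (intro bexI[of _ "e @ r"]) (auto simp: nth_append)
  qed
qed simp

lemma subst_pow_with_letter_at:
  assumes "admits_letter_everywhere \<theta> c" and "\<And>x. \<theta> x \<noteq> {}"
    and "\<And>x e. e \<in> \<theta> x \<Longrightarrow> e \<noteq> []" and "p < length z"
  shows "\<exists>\<rho>\<in>subst_pow \<theta> (Suc K) z. p < length \<rho> \<and> \<rho> ! p = c"
proof -
  obtain v where v: "v \<in> subst_pow \<theta> K z"
    using subst_pow_nonempty[of \<theta>, OF assms(2)] by blast
  have "length z \<le> length v"
    using assms(3) v by (rule length_le_subst_pow)
  then have "p < length v"
    using assms(4) by simp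
  then have "\<exists>\<rho>\<in>subst_word \<theta> v. p < length \<rho> \<and> \<rho> ! p = c"
    using assms(1-3) by (intro subst_word_with_letter_at)
  then obtain \<rho> where "\<rho> \<in> subst_word \<theta> v" "p < length \<rho>" "\<rho> ! p = c"
    by blast
  moreover have "\<rho> \<in> subst_pow \<theta> (Suc K) z"
    using v \<open>\<rho> \<in> subst_word \<theta> v\<close> by (auto simp: subst_pow_Suc)
  ultimately show ?thesis
    by blast
qed

locale seeded_substitution =
  fixes \<theta> :: "'a \<Rightarrow> 'a list set" and a :: 'a and s t :: "'a list" and k :: nat
  assumes images_nonempty: "\<theta> x \<noteq> {}"
    and images_nonerasing: "e \<in> \<theta> x \<Longrightarrow> e \<noteq> []"
    and seed: "s @ [a] @ t \<in> subst_pow \<theta> k [a]"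
    and seed_left_nonempty: "s \<noteq> []" and seed_right_nonempty: "t \<noteq> []"
    and letters_reachable: "\<exists>m. \<exists>z\<in>subst_pow \<theta> m [a]. c \<in> set z"
begin

fun left_tower :: "nat \<Rightarrow> 'a list" where
  "left_tower 0 = []"
| "left_tower (Suc j) = chosen_image \<theta> k (left_tower j) @ s"

fun right_tower :: "nat \<Rightarrow> 'a list" where
  "right_tower 0 = []"
| "right_tower (Suc j) = t @ chosen_image \<theta> k (right_tower j)"

lemma towers_in_subst_pow: "left_tower j @ [a] @ right_tower j \<in> subst_pow \<theta> (k * j) [a]"
proof (induction j)
  case (Suc j)
  have "chosen_image \<theta> k (left_tower j) @ (s @ [a] @ t) @ chosen_image \<theta> k (right_tower j)
      \<in> subst_pow \<theta> k (left_tower j @ [a] @ right_tower j)"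
    by (intro append_in_subst_pow chosen_image_in_subst_pow images_nonempty seed)
  then have "left_tower (Suc j) @ [a] @ right_tower (Suc j)
      \<in> subst_pow \<theta> k (left_tower j @ [a] @ right_tower j)"
    by simp
  with Suc.IH show ?case
    by (simp add: subst_pow_trans)
qed simp

lemma suffix_left_tower: "suffix (left_tower j) (left_tower (Suc j))"
proof (induction j)
  case (Suc j)
  then have "suffix (chosen_image \<theta> k (left_tower j)) (chosen_image \<theta> k (left_tower (Suc j)))"
    by (rule suffix_chosen_image)
  then show ?case
    by (simp only: left_tower.simps(2) same_suffix_suffix)
qed simp

lemma prefix_right_tower: "prefix (right_tower j) (right_tower (Suc j))"
proof (induction j)
  case (Suc j)
  then have "prefix (chosen_image \<theta> k (right_tower j)) (chosen_image \<theta> k (right_tower (Suc j)))"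
    by (rule prefix_chosen_image)
  then show ?case
    by (simp only: right_tower.simps(2) same_prefix_prefix)
qed simp

lemma length_chosen_image: "length w \<le> length (chosen_image \<theta> K w)"
  using images_nonerasing chosen_image_in_subst_pow[of \<theta>, OF images_nonempty]
  by (rule length_le_subst_pow)

lemma length_left_tower: "j \<le> length (left_tower j)"
proof (induction j)
  case (Suc j)
  have "0 < length s"
    using seed_left_nonempty by simp
  moreover have "length (left_tower (Suc j)) = length (chosen_image \<theta> k (left_tower j)) + length s"
    by simp
  ultimately show ?case
    using Suc.IH length_chosen_image[of "left_tower j" k] by linarith
qed simp

lemma length_right_tower: "j \<le> length (right_tower j)"
proof (induction j)
  case (Suc j)
  have "0 < length t"
    using seed_right_nonempty by simp
  moreover have "length (right_tower (Suc j)) = length (chosen_image \<theta> k (right_tower j)) + length t"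
    by simp
  ultimately show ?case
    using Suc.IH length_chosen_image[of "right_tower j" k] by linarith
qed simp

lemma subword_of_power_in_lang:
  assumes "y \<in> subst_pow \<theta> K [a]" and "sublist w y"
  shows "w \<in> lang (subshift \<theta>)"
proof -
  define L where "L j = chosen_image \<theta> K (left_tower j)" for j
  define R where "R j = y @ chosen_image \<theta> K (right_tower j)" for j
  have L_mono: "suffix (L j) (L (Suc j))" for j
    unfolding L_def by (rule suffix_chosen_image[OF suffix_left_tower])
  have R_mono: "prefix (R j) (R (Suc j))" for j
    unfolding R_def using prefix_chosen_image[OF prefix_right_tower] by simp
  have L_long: "j \<le> length (L j)" for j
    unfolding L_def using length_left_tower[of j] length_chosen_image[of "left_tower j" K] by linarith
  have R_long: "j \<le> length (R j)" for j
    unfolding R_def using length_right_tower[of j] length_chosen_image[of "right_tower j" K] by simp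
  obtain x where x_factors: "\<And>i n. \<exists>j. sublist (factor x i n) (L j @ R j)"
    and x_origin: "factor x 0 (length (R 0)) = R 0"
    using nested_words_limit[OF L_mono R_mono L_long R_long] by blast
  have "L j @ R j \<in> subst_pow \<theta> K (left_tower j @ [a] @ right_tower j)" for j
    unfolding L_def R_def by (intro append_in_subst_pow chosen_image_in_subst_pow images_nonempty assms(1))
  then have "L j @ R j \<in> subst_pow \<theta> (K + k * j) [a]" for j
    using towers_in_subst_pow subst_pow_trans by blast
  then have "x \<in> subshift \<theta>"
    using x_factors unfolding subshift_def legal_iff_subst_pow by blast
  moreover have "factor x 0 (length y) = y"
    using x_origin by (simp add: R_def)
  ultimately show ?thesis
    using assms(2) sublist_factor_in_lang by metis
qed

lemma seed_exponent_pos: "0 < k"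
proof (rule ccontr)
  assume "\<not> 0 < k"
  then have "s @ [a] @ t = [a]"
    using seed by simp
  then show False
    using seed_left_nonempty by (cases s) auto
qed

lemma legal_subword_of_power:
  assumes "legal \<theta> w"
  shows "\<exists>K. \<exists>y\<in>subst_pow \<theta> (Suc K) [a]. sublist w y"
proof -
  obtain K c v where v: "v \<in> subst_pow \<theta> K [c]" and "sublist w v"
    using assms unfolding legal_iff_subst_pow by blast
  obtain m z where z: "z \<in> subst_pow \<theta> m [a]" and "c \<in> set z"
    using letters_reachable by blast
  obtain z' where "z' \<in> subst_pow \<theta> K z" and "sublist v z'"
    using sublist_subst_pow_of_mem[OF images_nonempty \<open>c \<in> set z\<close> v] by blast
  then have z': "z' \<in> subst_pow \<theta> (K + m) [a]"
    using z subst_pow_trans by blast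
  obtain y where "y \<in> subst_pow \<theta> (K + m) (s @ [a] @ t)" and "sublist z' y"
    using sublist_subst_pow_of_mem[OF images_nonempty _ z', of "s @ [a] @ t"] by auto
  then have "y \<in> subst_pow \<theta> (K + m + k) [a]"
    using seed subst_pow_trans by blast
  moreover have "sublist w y"
    using \<open>sublist w v\<close> \<open>sublist v z'\<close> \<open>sublist z' y\<close> by (meson sublist_order.order_trans)
  moreover have "K + m + k = Suc (K + m + k - 1)"
    using seed_exponent_pos by simp
  ultimately show ?thesis
    by metis
qed

lemma sublist_in_lang_subshift:
  assumes "v \<in> lang (subshift \<theta>)" and "sublist w v"
  shows "w \<in> lang (subshift \<theta>)"
proof -
  have "legal \<theta> w"
    using legal_if_in_lang_subshift[OF assms(1)] assms(2) by (rule legal_sublist)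
  then show ?thesis
    using legal_subword_of_power subword_of_power_in_lang by blast
qed

lemma extension_with_letter_at:
  assumes "admits_letter_everywhere \<theta> c" and "y \<in> subst_pow \<theta> (Suc K) [a]"
  shows "\<exists>u v. length u = d \<and> y @ u @ [c] @ v \<in> lang (subshift \<theta>)"
proof -
  let ?j = "Suc d"
  have "d < length (right_tower ?j)"
    using length_right_tower[of ?j] by simp
  then have "\<exists>\<rho>\<in>subst_pow \<theta> (Suc K) (right_tower ?j). d < length \<rho> \<and> \<rho> ! d = c"
    using assms(1) images_nonempty images_nonerasing by (intro subst_pow_with_letter_at)
  then obtain \<rho> where \<rho>: "\<rho> \<in> subst_pow \<theta> (Suc K) (right_tower ?j)" "d < length \<rho>" "\<rho> ! d = c"
    by blast
  have "chosen_image \<theta> (Suc K) (left_tower ?j) @ y @ \<rho>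
      \<in> subst_pow \<theta> (Suc K) (left_tower ?j @ [a] @ right_tower ?j)"
    by (intro append_in_subst_pow chosen_image_in_subst_pow images_nonempty assms(2) \<rho>(1))
  then have "chosen_image \<theta> (Suc K) (left_tower ?j) @ y @ \<rho> \<in> subst_pow \<theta> (Suc K + k * ?j) [a]"
    using towers_in_subst_pow subst_pow_trans by blast
  then have "y @ \<rho> \<in> lang (subshift \<theta>)"
    by (rule subword_of_power_in_lang) (rule sublist_append_leftI)
  moreover have "take d \<rho> @ [c] @ drop (Suc d) \<rho> = \<rho>"
    using Cons_nth_drop_Suc[OF \<rho>(2)] \<rho>(3) append_take_drop_id[of d \<rho>] by simp
  moreover have "length (take d \<rho>) = d"
    using \<rho>(2) by simp
  ultimately show ?thesis
    by metis
qed

lemma letter_in_lang: "[e] \<in> lang (subshift \<theta>)"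
proof -
  obtain m z where z: "z \<in> subst_pow \<theta> m [a]" and "e \<in> set z"
    using letters_reachable by blast
  then obtain z1 z2 where "z = z1 @ [e] @ z2"
    using split_list by fastforce
  then have "sublist [e] z"
    using sublist_appendI[of "[e]" z1 z2] by simp
  with z show ?thesis
    by (rule subword_of_power_in_lang)
qed

lemma extensions_with_letter_in_lang:
  assumes "admits_letter_everywhere \<theta> c" and "w \<in> lang (subshift \<theta>)"
  shows "\<exists>N. \<forall>n\<ge>N. \<exists>u. length u = n \<and> w @ u @ [c] \<in> lang (subshift \<theta>)"
proof -
  obtain K y where y: "y \<in> subst_pow \<theta> (Suc K) [a]" and "sublist w y"
    using legal_subword_of_power legal_if_in_lang_subshift[OF assms(2)] by blast
  then obtain p q where pwq: "y = p @ w @ q"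
    by (auto simp: sublist_def)
  have "\<exists>u. length u = n \<and> w @ u @ [c] \<in> lang (subshift \<theta>)" if "length q \<le> n" for n
  proof -
    obtain u v where "length u = n - length q" and "y @ u @ [c] @ v \<in> lang (subshift \<theta>)"
      using extension_with_letter_at[OF assms(1) y] by blast
    moreover have "sublist (w @ (q @ u) @ [c]) (y @ u @ [c] @ v)"
      using sublist_appendI[of "w @ (q @ u) @ [c]" p v] by (simp add: pwq)
    ultimately show ?thesis
      using that sublist_in_lang_subshift by (intro exI[of _ "q @ u"]) auto
  qed
  then show ?thesis
    by blast
qed

theorem semi_mixing_singleton:
  assumes "admits_letter_everywhere \<theta> c" and "b \<noteq> c"
  shows "semi_mixing (subshift \<theta>) {[c]} 1"
proof -
  have "[b] \<in> lang_len (subshift \<theta>) 1" and "[c] \<in> lang_len (subshift \<theta>) 1"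
    by (simp_all add: lang_len_def letter_in_lang)
  then have "{[c]} \<subset> lang_len (subshift \<theta>) 1"
    using assms(2) by blast
  moreover have "\<exists>N. \<forall>n\<ge>N. \<exists>u s'. length u = n \<and> s' \<in> {[c]} \<and> w @ u @ s' \<in> lang (subshift \<theta>)"
    if "w \<in> lang (subshift \<theta>)" for w
    using extensions_with_letter_in_lang[OF assms(1) that] by simp
  ultimately show ?thesis
    unfolding semi_mixing_def by blast
qed

end

lemma fib_seeded: "seeded_substitution fib_subst A [A] [B] 2"
proof
  show "fib_subst x \<noteq> {}" for x
    by (cases x) auto
  show "e \<in> fib_subst x \<Longrightarrow> e \<noteq> []" for x e
    by (cases x) auto
  have "[B, A] \<in> subst_pow fib_subst 1 [A]"
    by auto
  moreover have "[A] @ [A, B] \<in> subst_pow fib_subst 1 [B, A]"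
    using append_in_subst_pow[of "[A]" fib_subst 1 "[B]" "[A, B]" "[A]"] by simp
  ultimately have "[A] @ [A, B] \<in> subst_pow fib_subst (1 + 1) [A]"
    by (rule subst_pow_trans)
  then show "[A] @ [A] @ [B] \<in> subst_pow fib_subst 2 [A]"
    by (simp add: numeral_2_eq_2)
  show "\<exists>m. \<exists>z\<in>subst_pow fib_subst m [A]. c \<in> set z" for c
  proof -
    have "[A, B] \<in> subst_pow fib_subst 1 [A]" and "c \<in> set [A, B]"
      by (auto intro: ab.exhaust)
    then show ?thesis
      by blast
  qed
qed simp_all

lemma fib_admits_A: "admits_letter_everywhere fib_subst A"
  unfolding admits_letter_everywhere_def
proof
  show "\<forall>e\<in>fib_subst x. \<forall>q<length e. \<exists>e'\<in>fib_subst x. length e' = length e \<and> e' ! q = A" for x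
    by (cases x) (auto simp: less_Suc_eq)
qed

lemma trib_seeded: "seeded_substitution trib_subst A3 [A3, C3] [B3] 2"
proof
  show "trib_subst x \<noteq> {}" for x
    by (cases x) auto
  show "e \<in> trib_subst x \<Longrightarrow> e \<noteq> []" for x e
    by (cases x) auto
  have "[B3, A3] \<in> subst_pow trib_subst 1 [A3]"
    by auto
  moreover have "[A3, C3] @ [A3, B3] \<in> subst_pow trib_subst 1 [B3, A3]"
    using append_in_subst_pow[of "[A3, C3]" trib_subst 1 "[B3]" "[A3, B3]" "[A3]"] by simp
  ultimately have "[A3, C3] @ [A3, B3] \<in> subst_pow trib_subst (1 + 1) [A3]"
    by (rule subst_pow_trans)
  then have seed: "[A3, C3, A3, B3] \<in> subst_pow trib_subst 2 [A3]"
    by (simp add: numeral_2_eq_2)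
  then show "[A3, C3] @ [A3] @ [B3] \<in> subst_pow trib_subst 2 [A3]"
    by simp
  show "\<exists>m. \<exists>z\<in>subst_pow trib_subst m [A3]. c \<in> set z" for c
  proof -
    have "c \<in> set [A3, C3, A3, B3]"
      by (cases c) auto
    then show ?thesis
      using seed by blast
  qed
qed simp_all

lemma trib_admits_A3: "admits_letter_everywhere trib_subst A3"
  unfolding admits_letter_everywhere_def
proof
  show "\<forall>e\<in>trib_subst x. \<forall>q<length e. \<exists>e'\<in>trib_subst x. length e' = length e \<and> e' ! q = A3" for x
    by (cases x) (auto simp: less_Suc_eq)
qed

lemma metallic_word_in_image: "i \<le> m \<Longrightarrow> replicate i A @ [B] @ replicate (m - i) A \<in> metallic_subst m A"
  by auto

lemma metallic_seeded:
  assumes "2 \<le> m"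
  shows "seeded_substitution (metallic_subst m) A [B] (replicate (m - 1) A) 1"
proof
  show "metallic_subst m x \<noteq> {}" for x
    by (cases x) auto
  show "e \<in> metallic_subst m x \<Longrightarrow> e \<noteq> []" for x e
    by (cases x) auto
  have "replicate 0 A @ [B] @ replicate (m - 0) A \<in> metallic_subst m A"
    by (rule metallic_word_in_image) simp
  moreover have "replicate 0 A @ [B] @ replicate (m - 0) A = [B] @ [A] @ replicate (m - 1) A"
    using assms by (cases m) auto
  ultimately show seed: "[B] @ [A] @ replicate (m - 1) A \<in> subst_pow (metallic_subst m) 1 [A]"
    by simp
  show "\<exists>k. \<exists>z\<in>subst_pow (metallic_subst m) k [A]. c \<in> set z" for c
  proof -
    have "c \<in> set ([B] @ [A] @ replicate (m - 1) A)"
      by (cases c) auto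
    then show ?thesis
      using seed by blast
  qed
  show "replicate (m - 1) A \<noteq> []"
    using assms by simp
qed simp

lemma metallic_admits_A:
  assumes "1 \<le> m"
  shows "admits_letter_everywhere (metallic_subst m) A"
proof -
  have A_anywhere: "\<exists>e'\<in>metallic_subst m A. length e' = Suc m \<and> e' ! q = A" if "q < Suc m" for q
  proof (cases q)
    case 0
    have "replicate 1 A @ [B] @ replicate (m - 1) A \<in> metallic_subst m A"
      using assms by (rule metallic_word_in_image)
    then show ?thesis
      using assms 0 by (intro bexI) auto
  next
    case (Suc q')
    have "replicate 0 A @ [B] @ replicate (m - 0) A \<in> metallic_subst m A"
      by (rule metallic_word_in_image) simp
    then show ?thesis
      using that Suc by (intro bexI) (auto simp: nth_append)
  qed
  have "\<forall>e\<in>metallic_subst m x. \<forall>q<length e. \<exists>e'\<in>metallic_subst m x. length e' = length e \<and> e' ! q = A"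
    for x
    using A_anywhere by (cases x) auto
  then show ?thesis
    unfolding admits_letter_everywhere_def by blast
qed

theorem mainTheorem2:
  shows "semi_mixing (subshift fib_subst) {[A]} 1
       \<and> semi_mixing (subshift trib_subst) {[A3]} 1
       \<and> (\<forall>m::nat. m \<ge> 2 \<longrightarrow> semi_mixing (subshift (metallic_subst m)) {[A]} 1)"
proof (intro conjI allI impI)
  show "semi_mixing (subshift fib_subst) {[A]} 1"
    by (rule seeded_substitution.semi_mixing_singleton[OF fib_seeded fib_admits_A, where b = B]) simp
  show "semi_mixing (subshift trib_subst) {[A3]} 1"
    by (rule seeded_substitution.semi_mixing_singleton[OF trib_seeded trib_admits_A3, where b = B3]) simp
  show "semi_mixing (subshift (metallic_subst m)) {[A]} 1" if "2 \<le> m" for m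
    using that by (intro seeded_substitution.semi_mixing_singleton[OF metallic_seeded metallic_admits_A, where b = B]) simp_all
qed

end
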